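(* Let $p_0:(0,2/5]\times(0,\infty)\to(0,\infty)$ be any function. Call a tuple $(\psi,\theta,\epsilon,C,t,K,f,g,V,W,\mathcal E)$ a counterexample if: $\epsilon\in(0,2/5]$, $C>0$; $\psi,\theta:\mathbb N\to\mathbb R_{\ge0}$ are finitely supported; $f,g:\mathbb N\to\mathbb R_{\ge0}$ are multiplicative with $(1\star f)(n)\le n$ and $(1\star g)(n)\le n$ for all $n\ge1$; $V,W\subseteq\mathbb N$, $t\ge1$, $K\in\mathbb R$; $\mathcal E\subseteq \mathcal E_{\psi,\theta}^{t,K}\cap(V\times W)$; and $$\mu_{\psi,\theta}^{f,g}(\mathcal E) > (100e^{C})^{P_{\psi,\theta}(\epsilon, C)}(\operatorname{Log} t)^{\frac{1}{2}(e^{40C}-1)}\big(\mu_{\psi}^{f}(V)\mu_{\theta}^{g}(W)e^{-CK}\big)^{\frac{1}{2}+\epsilon}.$$ Let $(\psi,\theta,\epsilon,C,t,K,f,g,V,W,\mathcal E)$ be a counterexample with $\lvert\mathcal P_{\psi,\theta}\rvert$ minimal among all counterexamples, and let $p\in\mathcal P_{\psi,\theta}$. For integers $i,j\ge0$ let $V_i=\{v\in V:\nu_p(v)=i\}$, $W_j=\{w\in W:\nu_p(w)=j\}$, $m(i,j)=\frac{\mu_{\psi,\theta}^{f,g}(\mathcal E\cap(V_i\times W_j))}{\mu_{\psi,\theta}^{f,g}(\mathcal E)}$, $\alpha_i=\mu_\psi^f(V_i)/\mu_\psi^f(V)$, $\beta_j=\mu_\theta^g(W_j)/\mu_\theta^g(W)$,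 and $q=\frac{2}{1-2\epsilon}$, $q'=\frac{2}{1+2\epsilon}$. Then for all $i,j\ge0$, $$m(i,j)\leq (100e^{C})^{-\mathbf 1_{p\leq p_0(\epsilon, C)}}\,p^{-\frac{\lvert i-j\rvert}{q}}\big(\alpha_i \beta_j e^{\mathbf 1_{i\neq j}\cdot C}\big)^{\frac{1}{q'}}.$$
   Context: For $v,w\in\mathbb N$, $t\geq1$: $\omega_t(v,w) = \lvert\{ p \text{ prime}\le t : p\mid \frac{vw}{\gcd(v,w)^2}\}\rvert$; $D_{\psi,\theta}(v,w) = \frac{\max(w\psi(v),v\theta(w))}{\gcd(v,w)}$. $\mu_\psi^f(v)=\frac{f(v)\psi(v)}{v}$, $\mu_\psi^f(V)=\sum_{v\in V}\mu_\psi^f(v)$, $\mu_{\psi,\theta}^{f,g}(\mathcal E)=\sum_{(v,w)\in\mathcal E}\mu_\psi^f(v)\mu_\theta^g(w)$. $V_\psi=\operatorname{supp}\psi$, $W_\theta=\operatorname{supp}\theta$, $\mathcal E_{\psi,\theta}^{t,K}=\{(v,w)\in V_\psi\times W_\theta : D_{\psi,\theta}(v,w)\le 1,\ \omega_t(v,w)\ge K\}$. $\mathcal P_{\psi,\theta}=\{p \text{ prime}: \exists (v,w)\in V_\psi\times W_\theta,\ p\mid vw\}$ and $P_{\psi,\theta}(\epsilon,C)=p_0(\epsilon,C)+\lvert\mathcal P_{\psi,\theta}\cap[1,p_0(\epsilon,C)]\rvert$. $(1\star f)(n)=\sum_{d\mid n}f(d)$. $\operatorname{Log} t=\max\{1,\log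 t\}$. $\nu_p$ is the $p$-adic valuation; $\mathbf 1_S$ is $1$ if the condition $S$ holds and $0$ otherwise. *)

theory Defs
  imports Complex_Main "HOL-Computational_Algebra.Primes"
begin

text \<open>Natural numbers of the paper are the positive integers; functions on them are
  modelled as functions on nat that vanish at 0 (support convention).\<close>

definition suppf :: "(nat \<Rightarrow> real) \<Rightarrow> nat set" where
  "suppf \<psi> = {v. \<psi> v \<noteq> 0}"

definition omega_t :: "real \<Rightarrow> nat \<Rightarrow> nat \<Rightarrow> nat" where
  "omega_t t v w = card {p. prime p \<and> real p \<le> t \<and> p dvd ((v * w) div (gcd v w)^2)}"

definition Dpt :: "(nat \<Rightarrow> real) \<Rightarrow> (nat \<Rightarrow> real) \<Rightarrow> nat \<Rightarrow> nat \<Rightarrow> real" where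
  "Dpt \<psi> \<theta> v w = max (real w * \<psi> v) (real v * \<theta> w) / real (gcd v w)"

definition mu1 :: "(nat \<Rightarrow> real) \<Rightarrow> (nat \<Rightarrow> real) \<Rightarrow> nat \<Rightarrow> real" where
  "mu1 f \<psi> v = f v * \<psi> v / real v"

text \<open>Sum over V; terms outside the (finite) support of psi vanish, so we sum over V \<inter> supp psi.\<close>
definition muS :: "(nat \<Rightarrow> real) \<Rightarrow> (nat \<Rightarrow> real) \<Rightarrow> nat set \<Rightarrow> real" where
  "muS f \<psi> V = (\<Sum>v \<in> V \<inter> suppf \<psi>. mu1 f \<psi> v)"

definition muE :: "(nat \<Rightarrow> real) \<Rightarrow> (nat \<Rightarrow> real) \<Rightarrow> (nat \<Rightarrow> real) \<Rightarrow> (nat \<Rightarrow> real)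
    \<Rightarrow> (nat \<times> nat) set \<Rightarrow> real" where
  "muE f g \<psi> \<theta> E = (\<Sum>x \<in> E \<inter> (suppf \<psi> \<times> suppf \<theta>). mu1 f \<psi> (fst x) * mu1 g \<theta> (snd x))"

definition Eset :: "(nat \<Rightarrow> real) \<Rightarrow> (nat \<Rightarrow> real) \<Rightarrow> real \<Rightarrow> real \<Rightarrow> (nat \<times> nat) set" where
  "Eset \<psi> \<theta> t K = {(v, w). v \<in> suppf \<psi> \<and> w \<in> suppf \<theta> \<and> Dpt \<psi> \<theta> v w \<le> 1
                           \<and> real (omega_t t v w) \<ge> K}"

definition Pset :: "(nat \<Rightarrow> real) \<Rightarrow> (nat \<Rightarrow> real) \<Rightarrow> nat set" where
  "Pset \<psi> \<theta> = {p. prime p \<and> (\<exists>v \<in> suppf \<psi>. \<exists>w \<in> suppf \<theta>. p dvd v * w)}"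

definition Pbig :: "(real \<Rightarrow> real \<Rightarrow> real) \<Rightarrow> (nat \<Rightarrow> real) \<Rightarrow> (nat \<Rightarrow> real) \<Rightarrow> real \<Rightarrow> real \<Rightarrow> real" where
  "Pbig p0 \<psi> \<theta> \<epsilon> C = p0 \<epsilon> C + real (card (Pset \<psi> \<theta> \<inter> {p. 1 \<le> real p \<and> real p \<le> p0 \<epsilon> C}))"

definition LogT :: "real \<Rightarrow> real" where
  "LogT t = max 1 (ln t)"

definition multiplicative :: "(nat \<Rightarrow> real) \<Rightarrow> bool" where
  "multiplicative f \<longleftrightarrow> f 1 = 1 \<and> (\<forall>m n. coprime m n \<longrightarrow> f (m * n) = f m * f n)"

definition counterexample ::
  "(real \<Rightarrow> real \<Rightarrow> real) \<Rightarrow> (nat \<Rightarrow> real) \<Rightarrow> (nat \<Rightarrow> real) \<Rightarrow> real \<Rightarrow> real \<Rightarrow> real \<Rightarrow> real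
    \<Rightarrow> (nat \<Rightarrow> real) \<Rightarrow> (nat \<Rightarrow> real) \<Rightarrow> nat set \<Rightarrow> nat set \<Rightarrow> (nat \<times> nat) set \<Rightarrow> bool" where
  "counterexample p0 \<psi> \<theta> \<epsilon> C t K f g V W E \<longleftrightarrow>
     0 < \<epsilon> \<and> \<epsilon> \<le> 2/5 \<and> 0 < C \<and>
     (\<forall>n. 0 \<le> \<psi> n) \<and> (\<forall>n. 0 \<le> \<theta> n) \<and> \<psi> 0 = 0 \<and> \<theta> 0 = 0 \<and>
     finite (suppf \<psi>) \<and> finite (suppf \<theta>) \<and>
     (\<forall>n. 0 \<le> f n) \<and> (\<forall>n. 0 \<le> g n) \<and> multiplicative f \<and> multiplicative g \<and>
     (\<forall>n\<ge>1. (\<Sum>d | d dvd n. f d) \<le> real n) \<and> (\<forall>n\<ge>1. (\<Sum>d | d dvd n. g d) \<le> real n) \<and>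
     V \<subseteq> {1..} \<and> W \<subseteq> {1..} \<and> 1 \<le> t \<and>
     E \<subseteq> Eset \<psi> \<theta> t K \<inter> (V \<times> W) \<and>
     muE f g \<psi> \<theta> E >
       (100 * exp C) powr (Pbig p0 \<psi> \<theta> \<epsilon> C) * (LogT t) powr ((1/2) * (exp (40 * C) - 1))
       * (muS f \<psi> V * muS g \<theta> W * exp (- C * K)) powr (1/2 + \<epsilon>)"

end

theory Submission
  imports Defs
begin

(*
  Fix the levels i, j and write v = p^i u, w = p^j w' with u, w' coprime to p. Passing to the
  p-free parts gives a new tuple: weights psi'(u) = p^(j-i)+ psi(p^i u) and
  theta'(w') = p^(i-j)+ theta(p^j w'), the p-free parts of V_i, W_j and E restricted to V_i x W_j,
  and K lowered by 1 when i <> j. The extra powers of p leave D unchanged, omega_t drops by at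
  most one (through p, and only when i <> j), and p is no longer a prime of the tuple, so by
  minimality the new tuple obeys the bound. By multiplicativity the masses of E restricted to
  V_i x W_j, of V_i and of W_j are those of the new tuple times f(p^i)/p^max(i,j) and
  g(p^j)/p^max(i,j), whose product is at most p^-|i-j| since f(p^k) <= (1*f)(p^k) <= p^k.
  Dividing by the violated bound for the original tuple, whose P exceeds the new one by 1 when
  p <= p0, gives the claim.
*)

section \<open>Prime powers times integers coprime to p\<close>

lemma multiplicity_eq_iff_coprime_factor:
  fixes p v :: nat
  assumes "prime p" "v \<noteq> 0"
  shows "multiplicity p v = k \<longleftrightarrow> (\<exists>u. v = p ^ k * u \<and> \<not> p dvd u)"
proof
  have "p \<noteq> 1" using assms(1) by auto
  then obtain u where "v = p ^ multiplicity p v * u" "\<not> p dvd u"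
    using multiplicity_decompose'[of v p] assms(2) by auto
  then show "multiplicity p v = k \<Longrightarrow> \<exists>u. v = p ^ k * u \<and> \<not> p dvd u" by blast
next
  show "\<exists>u. v = p ^ k * u \<and> \<not> p dvd u \<Longrightarrow> multiplicity p v = k"
    using assms by (metis multiplicity_decomposeI not_prime_0)
qed

lemma gcd_prime_power_mult:
  fixes p v w :: nat
  assumes "prime p" "\<not> p dvd v" "\<not> p dvd w"
  shows "gcd (p ^ i * v) (p ^ j * w) = p ^ min i j * gcd v w"
proof -
  have *: "gcd (p ^ a * x) (p ^ b * y) = p ^ a * gcd x y"
    if "a \<le> b" "\<not> p dvd x" for a b x y
  proof -
    have split: "p ^ b * y = p ^ a * (p ^ (b - a) * y)"
      using \<open>a \<le> b\<close> by (metis le_add_diff_inverse power_add mult.assoc)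
    have "gcd (p ^ a * x) (p ^ b * y) = p ^ a * gcd x (p ^ (b - a) * y)"
      unfolding split by (rule gcd_mult_distrib_nat[symmetric])
    also have "gcd x (p ^ (b - a) * y) = gcd x y"
      using \<open>\<not> p dvd x\<close> assms(1)
      by (intro gcd_mult_right_left_cancel) (simp add: prime_imp_coprime coprime_commute)
    finally show ?thesis .
  qed
  show ?thesis
    using *[of i j v w] *[of j i w v] assms by (cases "i \<le> j") (simp_all add: gcd.commute)
qed

lemma mult_div_gcd_sq_prime_power_mult:
  fixes p v w :: nat
  assumes "prime p" "\<not> p dvd v" "\<not> p dvd w"
  shows "p ^ i * v * (p ^ j * w) div (gcd (p ^ i * v) (p ^ j * w))\<^sup>2
         = p ^ (i + j - 2 * min i j) * (v * w div (gcd v w)\<^sup>2)"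
proof -
  have "(gcd v w)\<^sup>2 dvd v * w"
    by (simp add: power2_eq_square mult_dvd_mono)
  then obtain n where n: "v * w = (gcd v w)\<^sup>2 * n" ..
  have "v \<noteq> 0" "w \<noteq> 0" "p \<noteq> 0" using assms by (metis dvd_0_right not_prime_0)+
  then have pos: "0 < (p ^ min i j * gcd v w)\<^sup>2" by simp
  have "p ^ i * v * (p ^ j * w) = (p ^ min i j * gcd v w)\<^sup>2 * (p ^ (i + j - 2 * min i j) * n)"
    by (simp add: n power_mult_distrib power_add[symmetric] power_mult[symmetric] algebra_simps)
  moreover have "v * w div (gcd v w)\<^sup>2 = n"
    using pos n by simp
  ultimately show ?thesis
    using pos by (simp add: gcd_prime_power_mult[OF assms])
qed

lemma omega_t_prime_power_mult_le:
  fixes p v w :: nat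
  assumes "prime p" "\<not> p dvd v" "\<not> p dvd w"
  shows "omega_t t (p ^ i * v) (p ^ j * w) \<le> omega_t t v w + (if i = j then 0 else 1)"
proof -
  define N where "N = v * w div (gcd v w)\<^sup>2"
  define S where "S = (\<lambda>n. {q. prime q \<and> real q \<le> t \<and> q dvd n})"
  have omega: "omega_t t (p ^ i * v) (p ^ j * w) = card (S (p ^ (i + j - 2 * min i j) * N))"
    "omega_t t v w = card (S N)"
    by (simp_all add: omega_t_def S_def N_def mult_div_gcd_sq_prime_power_mult[OF assms])
  show ?thesis
  proof (cases "i = j")
    case False
    have "S (p ^ (i + j - 2 * min i j) * N) \<subseteq> insert p (S N)"
    proof
      fix q assume q: "q \<in> S (p ^ (i + j - 2 * min i j) * N)"
      show "q \<in> insert p (S N)"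
      proof (cases "q dvd N")
        case False
        then have "q dvd p" using q by (auto simp: S_def prime_dvd_mult_iff dest: prime_dvd_power)
        then show ?thesis using q assms(1) by (simp add: S_def primes_dvd_imp_eq)
      qed (use q in \<open>simp add: S_def\<close>)
    qed
    moreover have "finite (S N)"
      by (rule finite_subset[of _ "{..nat \<lfloor>t\<rfloor>}"]) (auto simp: S_def le_nat_floor)
    ultimately have "card (S (p ^ (i + j - 2 * min i j) * N)) \<le> card (insert p (S N))"
      by (intro card_mono) auto
    also have "\<dots> \<le> Suc (card (S N))"
      by (simp add: card_insert_if \<open>finite (S N)\<close>)
    finally have "card (S (p ^ (i + j - 2 * min i j) * N)) \<le> Suc (card (S N))" .
    with False show ?thesis by (simp add: omega)
  qed (use omega in simp)
qed

lemma multiplicative_prime_power_mult: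
  fixes p v :: nat
  assumes "multiplicative f" "prime p" "\<not> p dvd v"
  shows "f (p ^ k * v) = f (p ^ k) * f v"
proof -
  have "coprime (p ^ k) v"
    using assms(2,3) by (simp add: prime_imp_coprime coprime_power_left_iff)
  then show ?thesis
    using assms(1) by (simp add: multiplicative_def)
qed

lemma le_of_divisor_sum_le:
  assumes "\<forall>n. 0 \<le> f n" "\<forall>n\<ge>1. (\<Sum>d | d dvd n. f d) \<le> real n" "1 \<le> n"
  shows "f n \<le> real n"
proof -
  have "f n \<le> (\<Sum>d | d dvd n. f d)"
    using assms(1,3) by (intro member_le_sum) auto
  also have "\<dots> \<le> real n" using assms(2,3) by blast
  finally show ?thesis .
qed

section \<open>Slices at a prime\<close>

(*
  The map u |-> p^k u identifies the p-free integers with the integers of p-adic valuation k.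
  The factor p^e (e = (j-i)+ on the left, (i-j)+ on the right) is what makes D invariant.
*)
definition slice_weight :: "nat \<Rightarrow> nat \<Rightarrow> nat \<Rightarrow> (nat \<Rightarrow> real) \<Rightarrow> nat \<Rightarrow> real" where
  "slice_weight p k e \<psi> u = (if p dvd u then 0 else real p ^ e * \<psi> (p ^ k * u))"

definition slice_set :: "nat \<Rightarrow> nat \<Rightarrow> nat set \<Rightarrow> nat set" where
  "slice_set p k V = {u. p ^ k * u \<in> V \<and> \<not> p dvd u}"

definition slice_pairs :: "nat \<Rightarrow> nat \<Rightarrow> nat \<Rightarrow> (nat \<times> nat) set \<Rightarrow> (nat \<times> nat) set" where
  "slice_pairs p i j E = {(u, w). (p ^ i * u, p ^ j * w) \<in> E \<and> \<not> p dvd u \<and> \<not> p dvd w}"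

lemma Dpt_slice_weight:
  fixes p u w :: nat
  assumes "prime p" "\<not> p dvd u" "\<not> p dvd w"
  shows "Dpt (slice_weight p i (j - i) \<psi>) (slice_weight p j (i - j) \<theta>) u w
         = Dpt \<psi> \<theta> (p ^ i * u) (p ^ j * w)"
proof -
  define m where "m = min i j"
  define x where "x = real w * (real p ^ (j - i) * \<psi> (p ^ i * u))"
  define y where "y = real u * (real p ^ (i - j) * \<theta> (p ^ j * w))"
  have pm: "0 < real p ^ m" using assms(1) prime_gt_0_nat by simp
  have "real (p ^ j * w) * \<psi> (p ^ i * u) = real p ^ m * x"
    "real (p ^ i * u) * \<theta> (p ^ j * w) = real p ^ m * y"
    by (simp_all add: x_def y_def m_def min_def power_add[symmetric])
  moreover have "real (gcd (p ^ i * u) (p ^ j * w)) = real p ^ m * real (gcd u w)"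
    by (simp add: m_def gcd_prime_power_mult[OF assms])
  ultimately have "Dpt \<psi> \<theta> (p ^ i * u) (p ^ j * w)
      = max (real p ^ m * x) (real p ^ m * y) / (real p ^ m * real (gcd u w))"
    unfolding Dpt_def by (simp only:)
  also have "\<dots> = real p ^ m * max x y / (real p ^ m * real (gcd u w))"
    using pm by (simp add: max_mult_distrib_left)
  also have "\<dots> = max x y / real (gcd u w)"
    using pm by (intro mult_divide_mult_cancel_left) simp
  finally show ?thesis
    using assms(2,3) by (simp add: Dpt_def slice_weight_def x_def y_def)
qed

lemma level_set_eq_image:
  fixes p :: nat
  assumes "prime p" "0 \<notin> V"
  shows "{v \<in> V. multiplicity p v = k} = (\<lambda>u. p ^ k * u) ` slice_set p k V"
proof -
  have "v \<in> V \<and> multiplicity p v = k \<longleftrightarrow> (\<exists>u. v = p ^ k * u \<and> u \<in> slice_set p k V)" for v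
  proof (cases "v \<in> V")
    case True
    then have "v \<noteq> 0" using assms(2) by metis
    then show ?thesis
      using True by (auto simp: slice_set_def multiplicity_eq_iff_coprime_factor[OF assms(1)])
  qed (auto simp: slice_set_def)
  then show ?thesis
    by blast
qed

lemma level_pairs_eq_image:
  fixes p :: nat
  assumes "prime p" "0 \<notin> V" "0 \<notin> W" "E \<subseteq> V \<times> W"
  shows "E \<inter> ({v \<in> V. multiplicity p v = i} \<times> {w \<in> W. multiplicity p w = j})
         = (\<lambda>(u, w). (p ^ i * u, p ^ j * w)) ` slice_pairs p i j E"
  using assms(4) unfolding level_set_eq_image[OF assms(1,2)] level_set_eq_image[OF assms(1,3)]
  by (auto simp: slice_set_def slice_pairs_def image_iff)

lemma suppf_slice_weight_iff:
  fixes p :: nat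
  assumes "0 < p" "\<not> p dvd u"
  shows "u \<in> suppf (slice_weight p k e \<psi>) \<longleftrightarrow> p ^ k * u \<in> suppf \<psi>"
  using assms by (simp add: suppf_def slice_weight_def)

lemma finite_suppf_slice_weight:
  fixes p :: nat
  assumes "0 < p" "finite (suppf \<psi>)"
  shows "finite (suppf (slice_weight p k e \<psi>))"
proof (rule finite_subset)
  show "suppf (slice_weight p k e \<psi>) \<subseteq> (\<lambda>u. p ^ k * u) -` suppf \<psi>"
    by (auto simp: suppf_def slice_weight_def split: if_splits)
  show "finite ((\<lambda>u. p ^ k * u) -` suppf \<psi>)"
    using assms by (intro finite_vimageI) (auto simp: inj_on_def)
qed

lemma mu1_prime_power_mult:
  fixes p u :: nat
  assumes "multiplicative f" "prime p" "\<not> p dvd u"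
  shows "mu1 f \<psi> (p ^ k * u) = f (p ^ k) / real p ^ (k + e) * mu1 f (slice_weight p k e \<psi>) u"
proof -
  have "0 < p" using assms(2) prime_gt_0_nat by simp
  then show ?thesis
    unfolding mu1_def slice_weight_def multiplicative_prime_power_mult[OF assms]
    using assms(3) by (simp add: power_add)
qed

lemma muS_image_prime_power_mult:
  fixes p :: nat
  assumes "multiplicative f" "prime p" "\<forall>u \<in> U. \<not> p dvd u"
  shows "muS f \<psi> ((\<lambda>u. p ^ k * u) ` U)
         = f (p ^ k) / real p ^ (k + e) * muS f (slice_weight p k e \<psi>) U"
proof -
  define U' where "U' = U \<inter> suppf (slice_weight p k e \<psi>)"
  have p: "0 < p" using assms(2) prime_gt_0_nat by simp
  have "(\<lambda>u. p ^ k * u) ` U \<inter> suppf \<psi> = (\<lambda>u. p ^ k * u) ` U'"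
    using assms(3) suppf_slice_weight_iff[OF p] by (auto simp: U'_def)
  moreover have "inj_on (\<lambda>u. p ^ k * u) U'"
    using p by (auto simp: inj_on_def)
  ultimately have "muS f \<psi> ((\<lambda>u. p ^ k * u) ` U) = (\<Sum>u \<in> U'. mu1 f \<psi> (p ^ k * u))"
    by (simp add: muS_def sum.reindex)
  also have "\<dots> = (\<Sum>u \<in> U'. f (p ^ k) / real p ^ (k + e) * mu1 f (slice_weight p k e \<psi>) u)"
    by (intro sum.cong refl mu1_prime_power_mult[OF assms(1,2)])
      (use assms(3) in \<open>auto simp: U'_def\<close>)
  finally show ?thesis
    by (simp add: muS_def U'_def sum_distrib_left)
qed

lemma muE_image_prime_power_mult:
  fixes p :: nat
  assumes "multiplicative f" "multiplicative g" "prime p"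
    and "\<forall>(u, w) \<in> S. \<not> p dvd u \<and> \<not> p dvd w"
  shows "muE f g \<psi> \<theta> ((\<lambda>(u, w). (p ^ i * u, p ^ j * w)) ` S)
         = f (p ^ i) / real p ^ (i + e) * (g (p ^ j) / real p ^ (j + e'))
           * muE f g (slice_weight p i e \<psi>) (slice_weight p j e' \<theta>) S"
proof -
  define h where "h = (\<lambda>(u, w). (p ^ i * u, p ^ j * w))"
  define \<psi>' where "\<psi>' = slice_weight p i e \<psi>"
  define \<theta>' where "\<theta>' = slice_weight p j e' \<theta>"
  define S' where "S' = S \<inter> (suppf \<psi>' \<times> suppf \<theta>')"
  have p: "0 < p" using assms(3) prime_gt_0_nat by simp
  have "h ` S \<inter> (suppf \<psi> \<times> suppf \<theta>) = h ` S'"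
  proof (intro equalityI subsetI)
    fix x assume "x \<in> h ` S \<inter> (suppf \<psi> \<times> suppf \<theta>)"
    then obtain u w where "(u, w) \<in> S" "x = (p ^ i * u, p ^ j * w)"
      "p ^ i * u \<in> suppf \<psi>" "p ^ j * w \<in> suppf \<theta>"
      by (auto simp: h_def)
    then show "x \<in> h ` S'"
      using assms(4) suppf_slice_weight_iff[OF p] unfolding h_def S'_def \<psi>'_def \<theta>'_def
      by (intro image_eqI[of _ _ "(u, w)"]) auto
  next
    fix x assume "x \<in> h ` S'"
    then show "x \<in> h ` S \<inter> (suppf \<psi> \<times> suppf \<theta>)"
      using assms(4) suppf_slice_weight_iff[OF p] unfolding h_def S'_def \<psi>'_def \<theta>'_def
      by auto
  qed
  then have "muE f g \<psi> \<theta> (h ` S) = (\<Sum>x \<in> h ` S'. mu1 f \<psi> (fst x) * mu1 g \<theta> (snd x))"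
    by (simp add: muE_def)
  also have "\<dots> = (\<Sum>x \<in> S'. mu1 f \<psi> (p ^ i * fst x) * mu1 g \<theta> (p ^ j * snd x))"
  proof -
    have "inj_on h S'"
      using p by (auto simp: inj_on_def h_def)
    then show ?thesis
      using sum.reindex[of h S' "\<lambda>x. mu1 f \<psi> (fst x) * mu1 g \<theta> (snd x)"]
      by (simp add: h_def case_prod_beta)
  qed
  also have "\<dots> = (\<Sum>x \<in> S'. f (p ^ i) / real p ^ (i + e) * (g (p ^ j) / real p ^ (j + e'))
                     * (mu1 f \<psi>' (fst x) * mu1 g \<theta>' (snd x)))"
  proof (intro sum.cong refl)
    fix x assume "x \<in> S'"
    then have "\<not> p dvd fst x" "\<not> p dvd snd x"
      using assms(4) by (auto simp: S'_def)
    then show "mu1 f \<psi> (p ^ i * fst x) * mu1 g \<theta> (p ^ j * snd x)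
      = f (p ^ i) / real p ^ (i + e) * (g (p ^ j) / real p ^ (j + e'))
        * (mu1 f \<psi>' (fst x) * mu1 g \<theta>' (snd x))"
      using mu1_prime_power_mult[OF assms(1,3), of "fst x" \<psi> i e]
        mu1_prime_power_mult[OF assms(2,3), of "snd x" \<theta> j e']
      by (simp add: \<psi>'_def \<theta>'_def)
  qed
  finally show ?thesis
    by (simp add: muE_def S'_def h_def \<psi>'_def \<theta>'_def sum_distrib_left)
qed

lemma slice_mem_Eset:
  fixes p u w :: nat
  assumes "prime p" "\<not> p dvd u" "\<not> p dvd w" "(p ^ i * u, p ^ j * w) \<in> Eset \<psi> \<theta> t K"
  shows "(u, w) \<in> Eset (slice_weight p i (j - i) \<psi>) (slice_weight p j (i - j) \<theta>) t
                       (K - (if i \<noteq> j then 1 else 0))"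
proof -
  have p: "0 < p" using assms(1) prime_gt_0_nat by simp
  have "real (omega_t t (p ^ i * u) (p ^ j * w)) \<le> real (omega_t t u w) + (if i \<noteq> j then 1 else 0)"
    using omega_t_prime_power_mult_le[OF assms(1-3), of t i j] by (auto split: if_splits)
  then show ?thesis
    using assms(4) suppf_slice_weight_iff[OF p] assms(2,3) Dpt_slice_weight[OF assms(1-3)]
    by (auto simp: Eset_def)
qed

lemma slice_pairs_subset:
  fixes p :: nat
  assumes "prime p" "E \<subseteq> Eset \<psi> \<theta> t K \<inter> (V \<times> W)"
  shows "slice_pairs p i j E \<subseteq> Eset (slice_weight p i (j - i) \<psi>) (slice_weight p j (i - j) \<theta>) t
                                  (K - (if i \<noteq> j then 1 else 0))
                                \<inter> (slice_set p i V \<times> slice_set p j W)"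
proof
  fix x assume "x \<in> slice_pairs p i j E"
  then obtain u w where "x = (u, w)" "(p ^ i * u, p ^ j * w) \<in> E" "\<not> p dvd u" "\<not> p dvd w"
    by (auto simp: slice_pairs_def)
  moreover from this(2) have "(p ^ i * u, p ^ j * w) \<in> Eset \<psi> \<theta> t K" "p ^ i * u \<in> V" "p ^ j * w \<in> W"
    using assms(2) by auto
  ultimately show "x \<in> Eset (slice_weight p i (j - i) \<psi>) (slice_weight p j (i - j) \<theta>) t
                           (K - (if i \<noteq> j then 1 else 0)) \<inter> (slice_set p i V \<times> slice_set p j W)"
    using slice_mem_Eset[OF assms(1)] by (simp add: slice_set_def)
qed

lemma Pset_slice_weight_subset:
  fixes p :: nat
  assumes "prime p"
  shows "Pset (slice_weight p i e \<psi>) (slice_weight p j e' \<theta>) \<subseteq> Pset \<psi> \<theta> - {p}"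
proof
  fix q assume "q \<in> Pset (slice_weight p i e \<psi>) (slice_weight p j e' \<theta>)"
  then obtain u w where q: "prime q" "q dvd u * w"
    and u: "\<not> p dvd u" "p ^ i * u \<in> suppf \<psi>" and w: "\<not> p dvd w" "p ^ j * w \<in> suppf \<theta>"
    by (auto simp: Pset_def suppf_def slice_weight_def split: if_splits)
  have "q \<noteq> p"
    using q u(1) w(1) assms by (auto simp: prime_dvd_mult_iff)
  moreover have "q dvd (p ^ i * u) * (p ^ j * w)"
    using dvd_mult[OF q(2), of "p ^ i * p ^ j"] by (simp add: ac_simps)
  ultimately show "q \<in> Pset \<psi> \<theta> - {p}"
    using q(1) u(2) w(2) by (auto simp: Pset_def)
qed

lemma finite_Pset:
  assumes "\<psi> 0 = 0" "\<theta> 0 = 0" "finite (suppf \<psi>)" "finite (suppf \<theta>)"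
  shows "finite (Pset \<psi> \<theta>)"
proof (rule finite_subset)
  show "Pset \<psi> \<theta> \<subseteq> (\<Union>(v, w) \<in> suppf \<psi> \<times> suppf \<theta>. {q. q dvd v * w})"
    by (auto simp: Pset_def)
  have "v * w \<noteq> 0" if "v \<in> suppf \<psi>" "w \<in> suppf \<theta>" for v w
    using that assms(1,2) by (cases "v = 0"; cases "w = 0") (simp_all add: suppf_def)
  then show "finite (\<Union>(v, w) \<in> suppf \<psi> \<times> suppf \<theta>. {q. q dvd v * w})"
    using assms(3,4) by auto
qed

lemma card_Pset_slice_weight_less:
  fixes p :: nat
  assumes "finite (Pset \<psi> \<theta>)" "p \<in> Pset \<psi> \<theta>"
  shows "card (Pset (slice_weight p i e \<psi>) (slice_weight p j e' \<theta>)) < card (Pset \<psi> \<theta>)"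
proof -
  have "prime p" using assms(2) by (simp add: Pset_def)
  then show ?thesis
    using assms Pset_slice_weight_subset by (intro psubset_card_mono) blast+
qed

lemma Pbig_le_of_subset:
  fixes p :: nat
  assumes "finite (Pset \<psi> \<theta>)" "p \<in> Pset \<psi> \<theta>" "Pset \<psi>' \<theta>' \<subseteq> Pset \<psi> \<theta> - {p}"
  shows "Pbig p0 \<psi>' \<theta>' \<epsilon> C \<le> Pbig p0 \<psi> \<theta> \<epsilon> C - (if real p \<le> p0 \<epsilon> C then 1 else 0)"
proof -
  define I where "I = {q :: nat. 1 \<le> real q \<and> real q \<le> p0 \<epsilon> C}"
  have "1 \<le> p" using assms(2) prime_ge_1_nat by (simp add: Pset_def)
  then have "p \<in> I \<longleftrightarrow> real p \<le> p0 \<epsilon> C" by (simp add: I_def)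
  moreover have "card (Pset \<psi>' \<theta>' \<inter> I) \<le> card (Pset \<psi> \<theta> \<inter> I - {p})"
    using assms(1,3) by (intro card_mono) auto
  moreover have "card (Pset \<psi> \<theta> \<inter> I - {p}) = card (Pset \<psi> \<theta> \<inter> I) - (if p \<in> I then 1 else 0)"
    and "p \<in> I \<Longrightarrow> 1 \<le> card (Pset \<psi> \<theta> \<inter> I)"
    using assms(1,2) by (auto simp: card_Diff_singleton_if Suc_le_eq card_gt_0_iff)
  ultimately show ?thesis
    by (auto simp: Pbig_def I_def of_nat_diff split: if_splits)
qed

section \<open>Masses and counterexamples\<close>

lemma mu1_nonneg: "(\<forall>n. 0 \<le> f n) \<Longrightarrow> (\<forall>n. 0 \<le> \<psi> n) \<Longrightarrow> 0 \<le> mu1 f \<psi> v"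
  by (simp add: mu1_def)

lemma muS_nonneg: "(\<forall>n. 0 \<le> f n) \<Longrightarrow> (\<forall>n. 0 \<le> \<psi> n) \<Longrightarrow> 0 \<le> muS f \<psi> V"
  unfolding muS_def by (intro sum_nonneg mu1_nonneg)

lemma muE_le_muS_mult:
  assumes "\<forall>n. 0 \<le> f n" "\<forall>n. 0 \<le> g n" "\<forall>n. 0 \<le> \<psi> n" "\<forall>n. 0 \<le> \<theta> n"
    and "finite (suppf \<psi>)" "finite (suppf \<theta>)" "E \<subseteq> V \<times> W"
  shows "muE f g \<psi> \<theta> E \<le> muS f \<psi> V * muS g \<theta> W"
proof -
  have "muE f g \<psi> \<theta> E \<le> (\<Sum>x \<in> (V \<inter> suppf \<psi>) \<times> (W \<inter> suppf \<theta>). mu1 f \<psi> (fst x) * mu1 g \<theta> (snd x))"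
    unfolding muE_def using assms by (intro sum_mono2) (auto intro!: mult_nonneg_nonneg mu1_nonneg)
  also have "\<dots> = muS f \<psi> V * muS g \<theta> W"
    by (simp add: muS_def sum_product sum.cartesian_product case_prod_beta)
  finally show ?thesis .
qed

lemma counterexample_masses_pos:
  assumes "counterexample p0 \<psi> \<theta> \<epsilon> C t K f g V W E"
  shows "0 < muE f g \<psi> \<theta> E" "0 < muS f \<psi> V" "0 < muS g \<theta> W"
proof -
  show E: "0 < muE f g \<psi> \<theta> E"
    using assms unfolding counterexample_def
    by (smt (verit) mult_nonneg_nonneg powr_ge_zero)
  have "muE f g \<psi> \<theta> E \<le> muS f \<psi> V * muS g \<theta> W"
    using assms unfolding counterexample_def by (intro muE_le_muS_mult) auto
  moreover have "0 \<le> muS f \<psi> V" "0 \<le> muS g \<theta> W"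
    using assms unfolding counterexample_def by (auto intro: muS_nonneg)
  ultimately have "0 < muS f \<psi> V * muS g \<theta> W" "0 \<le> muS f \<psi> V" "0 \<le> muS g \<theta> W"
    using E by linarith+
  then show "0 < muS f \<psi> V" "0 < muS g \<theta> W"
    by (simp_all add: zero_less_mult_iff)
qed

lemma counterexample_sliceI:
  fixes p i j :: nat
  assumes cex: "counterexample p0 \<psi> \<theta> \<epsilon> C t K f g V W E" and p: "prime p"
  defines "\<psi>' \<equiv> slice_weight p i (j - i) \<psi>" and "\<theta>' \<equiv> slice_weight p j (i - j) \<theta>"
    and "K' \<equiv> K - (if i \<noteq> j then 1 else 0)"
  assumes large: "(100 * exp C) powr Pbig p0 \<psi>' \<theta>' \<epsilon> C * LogT t powr (1/2 * (exp (40 * C) - 1))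
      * (muS f \<psi>' (slice_set p i V) * muS g \<theta>' (slice_set p j W) * exp (- C * K')) powr (1/2 + \<epsilon>)
      < muE f g \<psi>' \<theta>' (slice_pairs p i j E)"
  shows "counterexample p0 \<psi>' \<theta>' \<epsilon> C t K' f g
           (slice_set p i V) (slice_set p j W) (slice_pairs p i j E)"
proof -
  have "0 < p" using p prime_gt_0_nat by simp
  then have fin: "finite (suppf \<psi>')" "finite (suppf \<theta>')"
    using cex by (simp_all add: counterexample_def \<psi>'_def \<theta>'_def finite_suppf_slice_weight)
  have nonneg: "\<forall>n. 0 \<le> \<psi>' n" "\<forall>n. 0 \<le> \<theta>' n"
    using cex by (simp_all add: counterexample_def \<psi>'_def \<theta>'_def slice_weight_def)
  have zero: "\<psi>' 0 = 0" "\<theta>' 0 = 0"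
    by (simp_all add: \<psi>'_def \<theta>'_def slice_weight_def)
  have ge1: "slice_set p k X \<subseteq> {1..}" for k X
    by (auto simp: slice_set_def Suc_le_eq intro!: gr0I)
  have "slice_pairs p i j E \<subseteq> Eset \<psi>' \<theta>' t K' \<inter> (slice_set p i V \<times> slice_set p j W)"
    using cex unfolding \<psi>'_def \<theta>'_def K'_def counterexample_def
    by (intro slice_pairs_subset p) blast
  with cex large fin nonneg zero ge1 show ?thesis
    unfolding counterexample_def by blast
qed

lemma counterexample_level_masses:
  fixes p :: nat
  assumes cex: "counterexample p0 \<psi> \<theta> \<epsilon> C t K f g V W E" and p: "prime p"
  shows "muS f \<psi> {v \<in> V. multiplicity p v = i}
         = f (p ^ i) / real p ^ (i + e) * muS f (slice_weight p i e \<psi>) (slice_set p i V)"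
    and "muS g \<theta> {w \<in> W. multiplicity p w = j}
         = g (p ^ j) / real p ^ (j + e') * muS g (slice_weight p j e' \<theta>) (slice_set p j W)"
    and "muE f g \<psi> \<theta> (E \<inter> ({v \<in> V. multiplicity p v = i} \<times> {w \<in> W. multiplicity p w = j}))
         = f (p ^ i) / real p ^ (i + e) * (g (p ^ j) / real p ^ (j + e'))
           * muE f g (slice_weight p i e \<psi>) (slice_weight p j e' \<theta>) (slice_pairs p i j E)"
proof -
  from cex have mult: "multiplicative f" "multiplicative g"
    and nz: "0 \<notin> V" "0 \<notin> W" and EVW: "E \<subseteq> V \<times> W"
    unfolding counterexample_def by auto
  show "muS f \<psi> {v \<in> V. multiplicity p v = i}
         = f (p ^ i) / real p ^ (i + e) * muS f (slice_weight p i e \<psi>) (slice_set p i V)"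
    unfolding level_set_eq_image[OF p nz(1)]
    by (rule muS_image_prime_power_mult[OF mult(1) p]) (simp add: slice_set_def)
  show "muS g \<theta> {w \<in> W. multiplicity p w = j}
         = g (p ^ j) / real p ^ (j + e') * muS g (slice_weight p j e' \<theta>) (slice_set p j W)"
    unfolding level_set_eq_image[OF p nz(2)]
    by (rule muS_image_prime_power_mult[OF mult(2) p]) (simp add: slice_set_def)
  show "muE f g \<psi> \<theta> (E \<inter> ({v \<in> V. multiplicity p v = i} \<times> {w \<in> W. multiplicity p w = j}))
         = f (p ^ i) / real p ^ (i + e) * (g (p ^ j) / real p ^ (j + e'))
           * muE f g (slice_weight p i e \<psi>) (slice_weight p j e' \<theta>) (slice_pairs p i j E)"
    unfolding level_pairs_eq_image[OF p nz EVW]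
    by (rule muE_image_prime_power_mult[OF mult p]) (auto simp: slice_pairs_def)
qed

lemma slice_factors_le:
  fixes p i j :: nat
  assumes "\<forall>n. 0 \<le> f n" "\<forall>n\<ge>1. (\<Sum>d | d dvd n. f d) \<le> real n"
    and "\<forall>n. 0 \<le> g n" "\<forall>n\<ge>1. (\<Sum>d | d dvd n. g d) \<le> real n" and "prime p"
  shows "f (p ^ i) / real p ^ (i + (j - i)) * (g (p ^ j) / real p ^ (j + (i - j)))
         \<le> real p powr (- real_of_int \<bar>int i - int j\<bar>)"
proof -
  have p: "1 \<le> p" using assms(5) prime_ge_1_nat by simp
  have "f (p ^ i) \<le> real p ^ i" "g (p ^ j) \<le> real p ^ j"
    using le_of_divisor_sum_le[OF assms(1,2), of "p ^ i"]
      le_of_divisor_sum_le[OF assms(3,4), of "p ^ j"] p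
    by simp_all
  then have "f (p ^ i) / real p ^ (i + (j - i)) * (g (p ^ j) / real p ^ (j + (i - j)))
      \<le> real p ^ i / real p ^ (i + (j - i)) * (real p ^ j / real p ^ (j + (i - j)))"
    using assms(1,3) by (intro mult_mono divide_right_mono) auto
  also have "\<dots> = 1 / real p ^ ((j - i) + (i - j))"
    using p by (simp add: power_add)
  also have "\<dots> = real p powr (- real_of_int \<bar>int i - int j\<bar>)"
  proof -
    have "real_of_int \<bar>int i - int j\<bar> = real ((j - i) + (i - j))" by auto
    moreover have "real p powr real ((j - i) + (i - j)) = real p ^ ((j - i) + (i - j))"
      using p by (intro powr_realpow) simp
    ultimately show ?thesis
      unfolding powr_minus by (simp add: divide_inverse)
  qed
  finally show ?thesis .
qed

(*
  In the application x and y are the masses of the sliced and of the original E, Z' and Z the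
  corresponding products of V- and W-masses, and c the rescaling factor; the point is that
  c Z'^s = c^(1-s) (c Z')^s.
*)
lemma rescaled_ratio_le:
  fixes A L P P' d s c b x y Y Z Z' :: real
  assumes "1 < A" "0 \<le> L" "0 \<le> c" "c powr (1 - s) \<le> b" "P' \<le> P - d"
    and "0 \<le> Y" "0 \<le> Z" "0 \<le> Z'" "c * Z' = Y * Z"
    and "A powr P * L * Z powr s < y" "x \<le> A powr P' * L * Z' powr s"
  shows "c * x / y \<le> A powr (- d) * b * Y powr s"
proof -
  have cZ': "c * Z' powr s = c powr (1 - s) * Y powr s * Z powr s"
  proof (cases "c = 0")
    case False
    then have "c * Z' powr s = c powr (1 - s) * (c powr s * Z' powr s)"
      using assms(3) by (simp add: powr_add[symmetric])
    also have "c powr s * Z' powr s = Y powr s * Z powr s"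
      using assms(3,6-9) by (simp add: powr_mult[symmetric])
    finally show ?thesis by simp
  qed simp
  have b: "0 \<le> b"
    using assms(4) powr_ge_zero order_trans by blast
  have y: "0 < y"
    using assms(2,10) by (smt (verit) mult_nonneg_nonneg powr_ge_zero)
  have "c * x \<le> c * (A powr P' * L * Z' powr s)"
    using assms(3,11) by (rule mult_left_mono[rotated])
  also have "\<dots> = A powr P' * L * (c powr (1 - s) * Y powr s * Z powr s)"
    by (simp flip: cZ')
  also have "\<dots> \<le> (A powr (- d) * A powr P) * L * (b * Y powr s * Z powr s)"
  proof (intro mult_mono mult_right_mono)
    show "A powr P' \<le> A powr (- d) * A powr P"
      using assms(1,5) by (simp flip: powr_add)
  qed (use assms(2,4) b in auto)
  also have "\<dots> = A powr (- d) * b * Y powr s * (A powr P * L * Z powr s)"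
    by (simp add: ac_simps)
  also have "\<dots> \<le> A powr (- d) * b * Y powr s * y"
    using assms(10) b by (intro mult_left_mono) auto
  finally show ?thesis
    using y by (simp add: divide_le_eq ac_simps)
qed

lemma minimal_counterexample_slice_le:
  fixes p i j :: nat
  assumes cex: "counterexample p0 \<psi> \<theta> \<epsilon> C t K f g V W E"
    and minimal: "\<forall>\<psi>' \<theta>' \<epsilon>' C' t' K' f' g' V' W' E'.
        counterexample p0 \<psi>' \<theta>' \<epsilon>' C' t' K' f' g' V' W' E' \<longrightarrow>
        card (Pset \<psi> \<theta>) \<le> card (Pset \<psi>' \<theta>')"
    and p: "p \<in> Pset \<psi> \<theta>"
  defines "\<psi>' \<equiv> slice_weight p i (j - i) \<psi>" and "\<theta>' \<equiv> slice_weight p j (i - j) \<theta>"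
    and "K' \<equiv> K - (if i \<noteq> j then 1 else 0)"
  shows "muE f g \<psi>' \<theta>' (slice_pairs p i j E)
         \<le> (100 * exp C) powr Pbig p0 \<psi>' \<theta>' \<epsilon> C * LogT t powr (1/2 * (exp (40 * C) - 1))
           * (muS f \<psi>' (slice_set p i V) * muS g \<theta>' (slice_set p j W) * exp (- C * K'))
             powr (1/2 + \<epsilon>)"
proof -
  have "finite (Pset \<psi> \<theta>)"
    using cex by (intro finite_Pset) (simp_all add: counterexample_def)
  then have "card (Pset \<psi>' \<theta>') < card (Pset \<psi> \<theta>)"
    unfolding \<psi>'_def \<theta>'_def using p by (rule card_Pset_slice_weight_less)
  then have "\<not> counterexample p0 \<psi>' \<theta>' \<epsilon> C t K' f g
               (slice_set p i V) (slice_set p j W) (slice_pairs p i j E)"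
    using minimal by (meson not_le)
  moreover have "prime p" using p by (simp add: Pset_def)
  ultimately show ?thesis
    using counterexample_sliceI[OF cex] unfolding \<psi>'_def \<theta>'_def K'_def by (meson not_less)
qed

theorem lemma3p1:
  fixes p0 :: "real \<Rightarrow> real \<Rightarrow> real"
    and \<psi> \<theta> f g :: "nat \<Rightarrow> real"
    and \<epsilon> C t K :: real
    and V W :: "nat set"
    and E :: "(nat \<times> nat) set"
    and p :: nat
  assumes p0_pos: "\<forall>e c. 0 < e \<and> e \<le> 2/5 \<and> 0 < c \<longrightarrow> 0 < p0 e c"
    and cex: "counterexample p0 \<psi> \<theta> \<epsilon> C t K f g V W E"
    and minimal: "\<forall>\<psi>' \<theta>' \<epsilon>' C' t' K' f' g' V' W' E'.
        counterexample p0 \<psi>' \<theta>' \<epsilon>' C' t' K' f' g' V' W' E' \<longrightarrow>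
        card (Pset \<psi> \<theta>) \<le> card (Pset \<psi>' \<theta>')"
    and p: "p \<in> Pset \<psi> \<theta>"
  shows "\<forall>i j :: nat.
    muE f g \<psi> \<theta> (E \<inter> ({v \<in> V. multiplicity p v = i} \<times> {w \<in> W. multiplicity p w = j}))
      / muE f g \<psi> \<theta> E
    \<le> (100 * exp C) powr (- (if real p \<le> p0 \<epsilon> C then 1 else 0))
       * real p powr (- real_of_int \<bar>int i - int j\<bar> / (2 / (1 - 2 * \<epsilon>)))
       * ((muS f \<psi> {v \<in> V. multiplicity p v = i} / muS f \<psi> V)
          * (muS g \<theta> {w \<in> W. multiplicity p w = j} / muS g \<theta> W)
          * exp ((if i \<noteq> j then 1 else 0) * C)) powr (1 / (2 / (1 + 2 * \<epsilon>)))"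
proof (intro allI, goal_cases)
  case (1 i j)
  let ?\<psi>' = "slice_weight p i (j - i) \<psi>" and ?\<theta>' = "slice_weight p j (i - j) \<theta>"
  let ?K' = "K - (if i \<noteq> j then 1 else 0)"
  let ?c = "f (p ^ i) / real p ^ (i + (j - i)) * (g (p ^ j) / real p ^ (j + (i - j)))"
  have prime: "prime p" using p by (simp add: Pset_def)
  from cex have eps: "0 < \<epsilon>" "\<epsilon> \<le> 2/5" and C: "0 < C"
    and \<psi>\<theta>: "\<forall>n. 0 \<le> \<psi> n" "\<forall>n. 0 \<le> \<theta> n"
    and fg: "\<forall>n. 0 \<le> f n" "\<forall>n\<ge>1. (\<Sum>d | d dvd n. f d) \<le> real n"
            "\<forall>n. 0 \<le> g n" "\<forall>n\<ge>1. (\<Sum>d | d dvd n. g d) \<le> real n"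
    and violated: "(100 * exp C) powr Pbig p0 \<psi> \<theta> \<epsilon> C * LogT t powr (1/2 * (exp (40 * C) - 1))
                   * (muS f \<psi> V * muS g \<theta> W * exp (- C * K)) powr (1/2 + \<epsilon>) < muE f g \<psi> \<theta> E"
    unfolding counterexample_def by auto
  note masses =
    counterexample_level_masses(1)[OF cex prime, where i = i and e = "j - i"]
    counterexample_level_masses(2)[OF cex prime, where j = j and e' = "i - j"]
    counterexample_level_masses(3)[OF cex prime,
      where i = i and j = j and e = "j - i" and e' = "i - j"]
  note pos = counterexample_masses_pos[OF cex]
  have nonneg: "0 \<le> muS f \<psi> X" "0 \<le> muS g \<theta> X" "0 \<le> muS f ?\<psi>' X" "0 \<le> muS g ?\<theta>' X" for X
    using fg \<psi>\<theta> by (auto intro!: muS_nonneg simp: slice_weight_def)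
  have exponents: "1 / (2 / (1 + 2 * \<epsilon>)) = 1/2 + \<epsilon>"
    "real p powr (- real_of_int \<bar>int i - int j\<bar> / (2 / (1 - 2 * \<epsilon>)))
     = (real p powr (- real_of_int \<bar>int i - int j\<bar>)) powr (1 - (1/2 + \<epsilon>))"
    by (simp_all add: powr_powr field_simps)
  show ?case
    unfolding masses(3) exponents
  proof (rule rescaled_ratio_le[OF _ _ _ _ _ _ _ _ _
        violated minimal_counterexample_slice_le[OF cex minimal p]])
    show "1 < 100 * exp C" using exp_gt_one[OF C] by linarith
    show "?c powr (1 - (1/2 + \<epsilon>))
        \<le> (real p powr (- real_of_int \<bar>int i - int j\<bar>)) powr (1 - (1/2 + \<epsilon>))"
      using slice_factors_le[OF fg prime, of i j] fg eps by (intro powr_mono2) auto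
    show "Pbig p0 ?\<psi>' ?\<theta>' \<epsilon> C \<le> Pbig p0 \<psi> \<theta> \<epsilon> C - (if real p \<le> p0 \<epsilon> C then 1 else 0)"
      using Pbig_le_of_subset[OF _ p Pset_slice_weight_subset[OF prime]] cex
      by (simp add: counterexample_def finite_Pset)
    show "?c * (muS f ?\<psi>' (slice_set p i V) * muS g ?\<theta>' (slice_set p j W) * exp (- C * ?K'))
        = muS f \<psi> {v \<in> V. multiplicity p v = i} / muS f \<psi> V
          * (muS g \<theta> {w \<in> W. multiplicity p w = j} / muS g \<theta> W)
          * exp ((if i \<noteq> j then 1 else 0) * C) * (muS f \<psi> V * muS g \<theta> W * exp (- C * K))"
      using pos unfolding masses(1,2) by (simp add: field_simps exp_add[symmetric])
  qed (use pos nonneg fg in \<open>auto intro!: mult_nonneg_nonneg divide_nonneg_nonneg\<close>)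
qed

end
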